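(* Let $\langle A;\cdot\rangle$ be a semigroup which is an Abelian algebra. Then $\langle A;\cdot\rangle$ is a Hamiltonian algebra if and only if $\langle A;\cdot\rangle$ is an inflation of a subsemigroup which is a rectangular band of periodic commutative groups, and the product of any two idempotents of $A$ is an idempotent.
   Context: A semigroup $\langle T;\cdot\rangle$ is a rectangular band of semigroups $T_{i\lambda}$ if $\{T_{i\lambda}\mid i\in I,\lambda\in\Lambda\}$ is a partition of $T$ into subsemigroups with $T_{i\lambda}\cdot T_{j\mu}\subseteq T_{i\mu}$ for all $i,j\in I$, $\lambda,\mu\in\Lambda$; it is a rectangular band of periodic commutative groups if each $\langle T_{i\lambda};\cdot\rangle$ is a commutative group all of whose elements have finite order. A semigroup $\langle A;\cdot\rangle$ is an inflation of a subsemigroup $\langle B;\cdot\rangle$ if there is a partition $\{X_b\mid b\in B\}$ of $A$ with $b\in X_b$ and $x\cdot y=a\cdot b$ for all $a,b\in B$, $x\in X_a$, $y\in X_b$. An idempotent is $e$ with $ee=e$. A polynomial operation of an algebra is an operation obtained from a term by substituting elements of the algebra for some of its variables. An algebra is called Abelian if for every polynomial operation $t(x,y_1,\ldots,y_n)$ and all elements $u,v,c_1,\ldots,c_n,d_1,\ldots,d_n$ of the algebra, $t(u,c_1,\ldots,c_n)=t(u,d_1,\ldots,d_n)$ implies $t(v,c_1,\ldots,c_n)=t(v,d_1,\ldots,d_n)$. Subalgebras of a semigroup are its nonempty subsets closed under $\cdot$; an algebra is called Hamiltonian if the universe of every subalgebra is an equivalence class (block) of some congruence of the algebra. *)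

theory Defs
  imports "HOL-Algebra.Group"
begin

text \<open>The semigroup is the whole type 'a with the multiplication of class semigroup_mult.\<close>

text \<open>Terms over the semigroup: variables (indexed by nat) and constants (elements of A).
  Variable 0 plays the role of x, the others of y_1, ..., y_n.\<close>
datatype 'a sterm = SVar nat | SConst 'a | SMul "'a sterm" "'a sterm"

primrec seval :: "(nat \<Rightarrow> 'a::semigroup_mult) \<Rightarrow> 'a sterm \<Rightarrow> 'a" where
  "seval env (SVar i) = env i"
| "seval env (SConst a) = a"
| "seval env (SMul s t) = seval env s * seval env t"

definition abelian_sg :: "'a::semigroup_mult itself \<Rightarrow> bool" where
  "abelian_sg _ \<longleftrightarrow>
     (\<forall>(t::'a sterm) (u::'a) v (c::nat \<Rightarrow> 'a) d.
        seval (c(0 := u)) t = seval (d(0 := u)) t \<longrightarrow>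
        seval (c(0 := v)) t = seval (d(0 := v)) t)"

definition subsg :: "'a::semigroup_mult set \<Rightarrow> bool" where
  "subsg S \<longleftrightarrow> S \<noteq> {} \<and> (\<forall>x\<in>S. \<forall>y\<in>S. x * y \<in> S)"

definition sg_congruence :: "('a::semigroup_mult \<times> 'a) set \<Rightarrow> bool" where
  "sg_congruence \<theta> \<longleftrightarrow> equiv UNIV \<theta> \<and>
     (\<forall>a b c d. (a, b) \<in> \<theta> \<longrightarrow> (c, d) \<in> \<theta> \<longrightarrow> (a * c, b * d) \<in> \<theta>)"

definition hamiltonian_sg :: "'a::semigroup_mult itself \<Rightarrow> bool" where
  "hamiltonian_sg _ \<longleftrightarrow>
     (\<forall>S::'a set. subsg S \<longrightarrow> (\<exists>\<theta>. sg_congruence \<theta> \<and> S \<in> UNIV // \<theta>))"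

definition periodic_comm_group :: "'a::semigroup_mult set \<Rightarrow> bool" where
  "periodic_comm_group S \<longleftrightarrow>
     (\<exists>e. comm_group \<lparr>carrier = S, mult = (*), one = e\<rparr> \<and>
          (\<forall>x\<in>S. \<exists>n::nat. n > 0 \<and>
              x [^]\<^bsub>\<lparr>carrier = S, mult = (*), one = e\<rparr>\<^esub> n = e))"

text \<open>B is a rectangular band of periodic commutative groups T i l (i \<in> I, l \<in> L).
  Index sets are taken inside the carrier type (w.l.o.g., since all parts are nonempty).\<close>
definition rect_band_pcg :: "'a::semigroup_mult set \<Rightarrow> bool" where
  "rect_band_pcg B \<longleftrightarrow>
     (\<exists>(I::'a set) (L::'a set) (T::'a \<Rightarrow> 'a \<Rightarrow> 'a set).
        (\<Union>i\<in>I. \<Union>l\<in>L. T i l) = B \<and>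
        (\<forall>i\<in>I. \<forall>l\<in>L. T i l \<noteq> {}) \<and>
        (\<forall>i\<in>I. \<forall>l\<in>L. \<forall>j\<in>I. \<forall>m\<in>L. (i, l) \<noteq> (j, m) \<longrightarrow> T i l \<inter> T j m = {}) \<and>
        (\<forall>i\<in>I. \<forall>l\<in>L. subsg (T i l) \<and> periodic_comm_group (T i l)) \<and>
        (\<forall>i\<in>I. \<forall>l\<in>L. \<forall>j\<in>I. \<forall>m\<in>L. \<forall>x\<in>T i l. \<forall>y\<in>T j m. x * y \<in> T i m))"

definition inflation_of :: "'a::semigroup_mult set \<Rightarrow> bool" where
  "inflation_of B \<longleftrightarrow> subsg B \<and>
     (\<exists>X::'a \<Rightarrow> 'a set.
        (\<Union>b\<in>B. X b) = UNIV \<and>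
        (\<forall>a\<in>B. \<forall>b\<in>B. a \<noteq> b \<longrightarrow> X a \<inter> X b = {}) \<and>
        (\<forall>b\<in>B. b \<in> X b) \<and>
        (\<forall>a\<in>B. \<forall>b\<in>B. \<forall>x\<in>X a. \<forall>y\<in>X b. x * y = a * b))"

end

theory Submission
  imports Defs
begin

text \<open>Abelianness, applied to the polynomials \<open>y x\<close>, \<open>x y\<close> and \<open>y\<^sub>1 x y\<^sub>2\<close>, lets idempotents be
  absorbed inside products (\<open>a e b = a b\<close>), so the idempotents form a rectangular band, and,
  as soon as an idempotent exists, lets inner factors commute (\<open>a y z b = a z y b\<close>).
  A subsemigroup is a congruence block iff it is closed under exchanging elements inside the
  translations \<open>p x\<close>, \<open>x q\<close>, \<open>p x q\<close>. Testing this on the subsemigroup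
  \<open>{a\<^sup>3, a\<^sup>5, a\<^sup>6, \<dots>}\<close> shows that a Hamiltonian semigroup is periodic; conversely, in a periodic
  Abelian semigroup the exchange can be performed by inserting idempotent powers and commuting
  inner factors. A periodic Abelian semigroup retracts onto its group elements by
  \<open>x \<mapsto> x e\<^sub>x\<close>, where \<open>e\<^sub>x\<close> is the idempotent power of \<open>x\<close>, and this exhibits it as an
  inflation of the union of its maximal subgroups, which are periodic, commutative and
  multiply like the rectangular band of idempotents. Conversely, such an inflation is
  periodic, since every square lies in one of the periodic groups.\<close>

section \<open>Positive powers\<close>

text \<open>\<open>spow x n\<close> is \<open>x\<^bsup>n+1\<^esup>\<close>: a semigroup has no unit, hence no zeroth power.\<close>
fun spow :: "'a::semigroup_mult \<Rightarrow> nat \<Rightarrow> 'a" where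
  "spow x 0 = x"
| "spow x (Suc n) = spow x n * x"

lemma spow_add: "spow x m * spow x n = spow x (m + n + 1)"
  by (induction n) (simp_all add: mult.assoc[symmetric])

lemma spow_commute: "x * spow x n = spow x n * x"
  using spow_add[of x 0 n] by simp

lemma spow_spow: "spow (spow x m) n = spow x (m * n + m + n)"
proof (induction n)
  case (Suc n)
  have "spow (spow x m) (Suc n) = spow x (m * n + m + n) * spow x m" using Suc by simp
  also have "\<dots> = spow x (m * Suc n + m + Suc n)" by (simp add: spow_add algebra_simps)
  finally show ?case .
qed simp

lemma spow_idempotent: "e * e = e \<Longrightarrow> spow e n = e"
  by (induction n) simp_all

lemma spow_square: "spow (x * x) m = spow x (2 * m + 1)"
  using spow_spow[of x 1 m] by (simp add: mult_2)

lemma spow_in_subsg: "subsg S \<Longrightarrow> x \<in> S \<Longrightarrow> spow x n \<in> S"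
  by (induction n) (auto simp: subsg_def)

lemma idempotent_spow_unique:
  assumes "spow x m * spow x m = spow x m" and "spow x n * spow x n = spow x n"
  shows "spow x m = spow x n"
proof -
  have "spow x m = spow (spow x m) n" using spow_idempotent assms(1) by metis
  also have "\<dots> = spow (spow x n) m" by (simp add: spow_spow algebra_simps)
  also have "\<dots> = spow x n" using spow_idempotent assms(2) by metis
  finally show ?thesis .
qed

lemma idempotent_spow_Suc:
  assumes "spow x n * spow x n = spow x n"
  shows "spow x (Suc (2 * n)) * spow x (Suc (2 * n)) = spow x (Suc (2 * n))"
  using assms spow_add[of x n n] by (simp add: mult_2)

text \<open>If the powers of \<open>a\<close> repeat with period \<open>d\<close> from \<open>a\<^bsup>m+1\<^esup>\<close> on, then
  \<open>a\<^bsup>(m+1)d\<^esup>\<close> is idempotent.\<close>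
lemma idempotent_spow_if_spow_eq:
  assumes eq: "spow a m = spow a (m + d)" and "d > 0"
  shows "\<exists>n. spow a n * spow a n = spow a n"
proof -
  have step: "spow a (m + j) = spow a (m + d + j)" for j
    by (induction j) (use eq in simp_all)
  have periodic: "spow a (m + j) = spow a (m + j + t * d)" for t j
  proof (induction t)
    case (Suc t)
    have "spow a (m + j + Suc t * d) = spow a (m + (j + t * d) + d)" by (simp add: algebra_simps)
    also have "\<dots> = spow a (m + (j + t * d))" using step[of "j + t * d"] by (simp add: algebra_simps)
    finally show ?case using Suc by (simp add: algebra_simps)
  qed simp
  obtain d' where d: "d = Suc d'" using \<open>d > 0\<close> by (cases d) auto
  define k where "k = m + (m * d' + d')"
  have "spow a k * spow a k = spow a (m + (m * d' + d') + (m + 1) * d)"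
    unfolding k_def d by (simp add: spow_add algebra_simps)
  also have "\<dots> = spow a k" using periodic[of "m * d' + d'" "m + 1"] unfolding k_def by simp
  finally show ?thesis by blast
qed

definition periodic_sg :: "'a::semigroup_mult itself \<Rightarrow> bool" where
  "periodic_sg _ \<longleftrightarrow> (\<forall>x::'a. \<exists>n. spow x n * spow x n = spow x n)"

lemma periodic_sgD: "periodic_sg TYPE('a) \<Longrightarrow> \<exists>n. spow (x::'a::semigroup_mult) n * spow x n = spow x n"
  unfolding periodic_sg_def by blast

section \<open>Consequences of Abelianness\<close>

lemma abelian_mult_left:
  fixes u c d v :: "'a::semigroup_mult"
  assumes "abelian_sg TYPE('a)" and "u * c = u * d"
  shows "v * c = v * d"
proof -
  let ?t = "SMul (SVar 0) (SVar 1) :: 'a sterm"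
  have "seval ((\<lambda>_. c)(0 := u)) ?t = seval ((\<lambda>_. d)(0 := u)) ?t \<longrightarrow>
        seval ((\<lambda>_. c)(0 := v)) ?t = seval ((\<lambda>_. d)(0 := v)) ?t"
    using assms(1) unfolding abelian_sg_def by blast
  then show ?thesis using assms(2) by simp
qed

lemma abelian_mult_right:
  fixes u c d v :: "'a::semigroup_mult"
  assumes "abelian_sg TYPE('a)" and "c * u = d * u"
  shows "c * v = d * v"
proof -
  let ?t = "SMul (SVar 1) (SVar 0) :: 'a sterm"
  have "seval ((\<lambda>_. c)(0 := u)) ?t = seval ((\<lambda>_. d)(0 := u)) ?t \<longrightarrow>
        seval ((\<lambda>_. c)(0 := v)) ?t = seval ((\<lambda>_. d)(0 := v)) ?t"
    using assms(1) unfolding abelian_sg_def by blast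
  then show ?thesis using assms(2) by simp
qed

lemma abelian_mult_middle:
  fixes u c1 c2 d1 d2 v :: "'a::semigroup_mult"
  assumes "abelian_sg TYPE('a)" and "c1 * u * c2 = d1 * u * d2"
  shows "c1 * v * c2 = d1 * v * d2"
proof -
  let ?t = "SMul (SMul (SVar 1) (SVar 0)) (SVar 2) :: 'a sterm"
  let ?c = "\<lambda>i::nat. if i = 1 then c1 else c2"
  let ?d = "\<lambda>i::nat. if i = 1 then d1 else d2"
  have "seval (?c(0 := u)) ?t = seval (?d(0 := u)) ?t \<longrightarrow>
        seval (?c(0 := v)) ?t = seval (?d(0 := v)) ?t"
    using assms(1) unfolding abelian_sg_def by blast
  then show ?thesis using assms(2) by simp
qed

lemma abelian_absorb_idempotent:
  fixes a e b :: "'a::semigroup_mult"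
  assumes "abelian_sg TYPE('a)" and "e * e = e"
  shows "a * e * b = a * b"
  using abelian_mult_right[OF assms(1), of "a * e" e a b] assms(2) by (simp add: mult.assoc)

lemma abelian_idempotent_mult:
  fixes e f :: "'a::semigroup_mult"
  assumes "abelian_sg TYPE('a)" and "e * e = e" and "f * f = f"
  shows "(e * f) * (e * f) = e * f"
proof -
  have "(e * f) * (e * f) = (e * f) * e * f" by (simp add: mult.assoc)
  also have "\<dots> = (e * f) * f" using abelian_absorb_idempotent[OF assms(1,2)] .
  finally show ?thesis using assms(3) by (simp add: mult.assoc)
qed

lemma abelian_swap_inner:
  fixes a y z b e :: "'a::semigroup_mult"
  assumes ab: "abelian_sg TYPE('a)" and "e * e = e"
  shows "a * y * z * b = a * z * y * b"
proof -
  have "(a * y) * e * b = a * e * (y * b)"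
    using abelian_absorb_idempotent[OF assms, of "a * y" b]
      abelian_absorb_idempotent[OF assms, of a "y * b"]
    by (simp add: mult.assoc)
  from abelian_mult_middle[OF ab this, of z] show ?thesis by (simp add: mult.assoc)
qed

lemma abelian_idempotent_rectangular:
  fixes e f g :: "'a::semigroup_mult"
  assumes ab: "abelian_sg TYPE('a)" and e: "e * e = e" and "f * f = f" and g: "g * g = g"
  shows "f * e * (e * g) * e = f * e" and "e * (f * e * (e * g)) = e * g"
proof -
  have e': "\<And>x. e * (e * x) = e * x" using e by (simp add: mult.assoc[symmetric])
  have eg: "(e * g) * (e * g) = e * g" using abelian_idempotent_mult[OF ab e g] .
  have fe: "(f * e) * (f * e) = f * e" using abelian_idempotent_mult[OF ab assms(3) e] .
  show "f * e * (e * g) * e = f * e"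
    using abelian_absorb_idempotent[OF ab eg, of f e] e' by (simp add: mult.assoc)
  show "e * (f * e * (e * g)) = e * g"
    using abelian_absorb_idempotent[OF ab fe, of e g] e' by (simp add: mult.assoc)
qed

section \<open>Congruence blocks\<close>

definition translation_closed :: "'a::semigroup_mult set \<Rightarrow> bool" where
  "translation_closed S \<longleftrightarrow> (\<forall>s\<in>S. \<forall>s'\<in>S. \<forall>p q.
      (p * s \<in> S \<longrightarrow> p * s' \<in> S) \<and> (s * q \<in> S \<longrightarrow> s' * q \<in> S) \<and>
      (p * s * q \<in> S \<longrightarrow> p * s' * q \<in> S))"

lemma translation_closed_if_congruence_block:
  assumes cong: "sg_congruence \<theta>" and block: "S \<in> UNIV // \<theta>"
  shows "translation_closed S"
  unfolding translation_closed_def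
proof (intro ballI allI)
  fix s s' p q assume "s \<in> S" "s' \<in> S"
  have eqv: "equiv UNIV \<theta>"
    and mult: "\<And>a b c d. (a, b) \<in> \<theta> \<Longrightarrow> (c, d) \<in> \<theta> \<Longrightarrow> (a * c, b * d) \<in> \<theta>"
    using cong unfolding sg_congruence_def by auto
  have refl: "(a, a) \<in> \<theta>" for a using eqv by (meson UNIV_I equiv_def refl_onD)
  obtain x where S: "S = \<theta> `` {x}" using block by (auto elim: quotientE)
  have "(s, s') \<in> \<theta>" using S \<open>s \<in> S\<close> \<open>s' \<in> S\<close> eqv by (auto elim: equivE dest: symD transD)
  then have "(p * s, p * s') \<in> \<theta>" "(s * q, s' * q) \<in> \<theta>" "(p * s * q, p * s' * q) \<in> \<theta>"
    using mult refl by blast+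
  then show "(p * s \<in> S \<longrightarrow> p * s' \<in> S) \<and> (s * q \<in> S \<longrightarrow> s' * q \<in> S) \<and>
      (p * s * q \<in> S \<longrightarrow> p * s' * q \<in> S)"
    using S eqv by (auto elim: equivE dest: transD)
qed

text \<open>The block is the class of the syntactic congruence of \<open>S\<close>.\<close>
lemma congruence_block_if_translation_closed:
  fixes S :: "'a::semigroup_mult set"
  assumes closed: "translation_closed S" and "S \<noteq> {}"
  shows "\<exists>\<theta>. sg_congruence \<theta> \<and> S \<in> UNIV // \<theta>"
proof -
  define \<theta> where "\<theta> = {(x, y). \<forall>p q. (x \<in> S \<longleftrightarrow> y \<in> S) \<and> (p * x \<in> S \<longleftrightarrow> p * y \<in> S) \<and>
      (x * q \<in> S \<longleftrightarrow> y * q \<in> S) \<and> (p * x * q \<in> S \<longleftrightarrow> p * y * q \<in> S)}"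
  have eqv: "equiv UNIV \<theta>"
    unfolding equiv_def refl_on_def sym_def trans_def \<theta>_def by auto
  have right: "(a * c, b * c) \<in> \<theta>" if "(a, b) \<in> \<theta>" for a b c
  proof -
    have "(a \<in> S) = (b \<in> S)" "\<And>p. (p * a \<in> S) = (p * b \<in> S)" "\<And>q. (a * q \<in> S) = (b * q \<in> S)"
        "\<And>p q. (p * (a * q) \<in> S) = (p * (b * q) \<in> S)"
      using that unfolding \<theta>_def by (auto simp: mult.assoc)
    then show ?thesis unfolding \<theta>_def by (simp add: mult.assoc)
  qed
  have left: "(c * a, c * b) \<in> \<theta>" if "(a, b) \<in> \<theta>" for a b c
  proof -
    have "(a \<in> S) = (b \<in> S)" "\<And>p. (p * a \<in> S) = (p * b \<in> S)" "\<And>q. (a * q \<in> S) = (b * q \<in> S)"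
        "\<And>p q. (p * a * q \<in> S) = (p * b * q \<in> S)"
      using that unfolding \<theta>_def by (auto simp: mult.assoc)
    then show ?thesis unfolding \<theta>_def by (simp add: mult.assoc[symmetric])
  qed
  have "sg_congruence \<theta>"
    unfolding sg_congruence_def
    using eqv left right by (blast elim: equivE dest: transD)
  moreover obtain s0 where s0: "s0 \<in> S" using \<open>S \<noteq> {}\<close> by auto
  have "S = \<theta> `` {s0}"
  proof
    show "S \<subseteq> \<theta> `` {s0}"
      using closed s0 unfolding translation_closed_def \<theta>_def by blast
    show "\<theta> `` {s0} \<subseteq> S" using s0 unfolding \<theta>_def by auto
  qed
  then have "S \<in> UNIV // \<theta>" by (auto intro: quotientI)
  ultimately show ?thesis by blast
qed

lemma hamiltonian_sg_iff_translation_closed: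
  "hamiltonian_sg TYPE('a::semigroup_mult) \<longleftrightarrow> (\<forall>S::'a set. subsg S \<longrightarrow> translation_closed S)"
  unfolding hamiltonian_sg_def
  using translation_closed_if_congruence_block congruence_block_if_translation_closed
  by (metis subsg_def)

section \<open>Hamiltonian versus periodic\<close>

lemma idempotent_spow_if_translation_closed:
  assumes closed: "translation_closed {spow a k | k. k = 2 \<or> k \<ge> 4}"
  shows "\<exists>n. spow a n * spow a n = spow a n"
proof -
  let ?S = "{spow a k | k. k = 2 \<or> k \<ge> 4}"
  have "a * spow a 4 \<in> ?S" unfolding spow_commute by (auto simp: numeral_eq_Suc intro!: exI[of _ 5])
  moreover have "spow a 4 \<in> ?S" "spow a 2 \<in> ?S" by auto
  ultimately have "a * spow a 2 \<in> ?S" using closed unfolding translation_closed_def by blast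
  moreover have "a * spow a 2 = spow a 3" by (simp add: numeral_eq_Suc mult.assoc)
  ultimately obtain k where k: "spow a 3 = spow a k" "k = 2 \<or> k \<ge> 4" by auto
  show ?thesis
  proof (cases "k = 2")
    case True
    then show ?thesis using k idempotent_spow_if_spow_eq[of a 2 1] by simp
  next
    case False
    then show ?thesis using k idempotent_spow_if_spow_eq[of a 3 "k - 3"] by auto
  qed
qed

lemma periodic_if_hamiltonian:
  assumes "hamiltonian_sg TYPE('a::semigroup_mult)"
  shows "periodic_sg TYPE('a)"
  unfolding periodic_sg_def
proof
  fix a :: 'a
  have "subsg {spow a k | k. k = 2 \<or> k \<ge> 4}"
    unfolding subsg_def
  proof (intro conjI ballI)
    fix x y assume "x \<in> {spow a k | k. k = 2 \<or> k \<ge> 4}" "y \<in> {spow a k | k. k = 2 \<or> k \<ge> 4}"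
    then obtain i j where "x = spow a i" "y = spow a j" "i = 2 \<or> i \<ge> 4" "j = 2 \<or> j \<ge> 4"
      by blast
    then have "x * y = spow a (i + j + 1)" "i + j + 1 \<ge> 4" using spow_add by auto
    then show "x * y \<in> {spow a k | k. k = 2 \<or> k \<ge> 4}" by blast
  qed auto
  then show "\<exists>n. spow a n * spow a n = spow a n"
    using assms idempotent_spow_if_translation_closed
    unfolding hamiltonian_sg_iff_translation_closed by blast
qed

lemma idempotent_factor_in_subsg:
  assumes "periodic_sg TYPE('a::semigroup_mult)" and "subsg S" and "(s::'a) \<in> S"
  obtains w where "w \<in> S" "s * w = w * s" "(s * w) * (s * w) = s * w"
proof -
  obtain n where "spow s n * spow s n = spow s n" using periodic_sgD[OF assms(1)] by blast
  then have "spow s (Suc (2 * n)) * spow s (Suc (2 * n)) = spow s (Suc (2 * n))"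
    by (rule idempotent_spow_Suc)
  moreover have "spow s (Suc (2 * n)) = s * spow s (2 * n)" by (simp add: spow_commute)
  ultimately show ?thesis
    using that[of "spow s (2 * n)"] spow_in_subsg[OF assms(2,3)] spow_commute by simp
qed

lemma translation_closed_if_abelian_periodic:
  assumes ab: "abelian_sg TYPE('a::semigroup_mult)" and per: "periodic_sg TYPE('a)"
    and sub: "subsg (S::'a set)"
  shows "translation_closed S"
  unfolding translation_closed_def
proof (intro ballI allI conjI impI)
  fix s s' p q assume s: "s \<in> S" and s': "s' \<in> S"
  have cl: "\<And>x y. x \<in> S \<Longrightarrow> y \<in> S \<Longrightarrow> x * y \<in> S" using sub unfolding subsg_def by auto
  have absorb: "\<And>a e b::'a. e * e = e \<Longrightarrow> a * e * b = a * b"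
    using abelian_absorb_idempotent[OF ab] by blast
  obtain w where w: "w \<in> S" "s * w = w * s" and sw: "(s * w) * (s * w) = s * w"
    using idempotent_factor_in_subsg[OF per sub s] .
  have ws: "(w * s) * (w * s) = w * s" using sw w(2) by simp
  have swap: "\<And>a y z b::'a. a * y * z * b = a * z * y * b" using abelian_swap_inner[OF ab sw] .
  show "p * s' \<in> S" if "p * s \<in> S"
  proof -
    have "p * s' = (p * s) * (w * s')" using absorb[OF sw, of p s'] by (simp add: mult.assoc)
    then show ?thesis using that cl w s' by simp
  qed
  show "s' * q \<in> S" if "s * q \<in> S"
  proof -
    have "s' * q = (s' * w) * (s * q)" using absorb[OF ws, of s' q] by (simp add: mult.assoc)
    then show ?thesis using that cl w s' by simp
  qed
  show "p * s' * q \<in> S" if t: "p * s * q \<in> S"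
  proof -
    obtain v where v: "v \<in> S" "(p * s * q) * v = v * (p * s * q)"
      and vt: "(v * (p * s * q)) * (v * (p * s * q)) = v * (p * s * q)"
      using idempotent_factor_in_subsg[OF per sub t] by metis
    text \<open>Insert the idempotents \<open>s w\<close> and \<open>v p s q\<close>, then move \<open>s'\<close> past \<open>s\<close> and \<open>q\<close>.\<close>
    have "p * s' * q = p * s' * (s * w) * (v * (p * s * q)) * q"
      using absorb[OF sw, of "p * s'" q] absorb[OF vt, of "p * s' * (s * w)" q] by simp
    also have "\<dots> = p * s' * s * w * (v * p * s) * q * q" by (simp add: mult.assoc)
    also have "\<dots> = p * s * s' * w * (v * p * s) * q * q"
      using swap[of p s' s "w * (v * p * s) * q * q"] by (simp add: mult.assoc)
    also have "\<dots> = p * s * s' * w * q * (v * p * s) * q"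
      using swap[of "p * s * s' * w" "v * p * s" q q] by (simp add: mult.assoc)
    also have "\<dots> = p * s * s' * q * w * (v * p * s) * q"
      using swap[of "p * s * s'" w q "v * p * s * q"] by (simp add: mult.assoc)
    also have "\<dots> = p * s * q * s' * w * (v * p * s) * q"
      using swap[of "p * s" s' q "w * (v * p * s) * q"] by (simp add: mult.assoc)
    also have "\<dots> = (p * s * q) * (s' * w) * (v * (p * s * q))" by (simp add: mult.assoc)
    finally show ?thesis using cl t v w s' by simp
  qed
qed

lemma hamiltonian_if_abelian_periodic:
  assumes "abelian_sg TYPE('a::semigroup_mult)" and "periodic_sg TYPE('a)"
  shows "hamiltonian_sg TYPE('a)"
  using translation_closed_if_abelian_periodic[OF assms]
  unfolding hamiltonian_sg_iff_translation_closed by blast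

section \<open>The structure of periodic Abelian semigroups\<close>

definition idempotent_power :: "'a::semigroup_mult \<Rightarrow> 'a" where
  "idempotent_power x = spow x (SOME n. spow x n * spow x n = spow x n)"

definition group_part :: "'a::semigroup_mult set" where
  "group_part = {b. b * idempotent_power b = b}"

definition maximal_subgroup :: "'a::semigroup_mult \<Rightarrow> 'a set" where
  "maximal_subgroup e = {b \<in> group_part. idempotent_power b = e}"

lemma nat_pow_Suc_eq_spow:
  assumes "\<And>y. y \<in> T \<Longrightarrow> w * y = y" and "x \<in> T"
  shows "x [^]\<^bsub>\<lparr>carrier = T, mult = (*), one = w\<rparr>\<^esub> (Suc n) = spow x n"
  by (induction n) (use assms in simp_all)

context
  assumes abelian: "abelian_sg TYPE('a::semigroup_mult)"
    and periodic: "periodic_sg TYPE('a)"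
begin

lemma idempotent_power_idem: "idempotent_power (x::'a) * idempotent_power x = idempotent_power x"
  unfolding idempotent_power_def using someI_ex[OF periodic_sgD[OF periodic]] .

lemma idempotent_power_commute: "idempotent_power (x::'a) * x = x * idempotent_power x"
  unfolding idempotent_power_def by (simp add: spow_commute)

lemma idempotent_power_eq:
  "spow (x::'a) n * spow x n = spow x n \<Longrightarrow> idempotent_power x = spow x n"
  using idempotent_spow_unique idempotent_power_idem unfolding idempotent_power_def by blast

lemma idempotent_power_of_idempotent: "(e::'a) * e = e \<Longrightarrow> idempotent_power e = e"
  using idempotent_power_eq[of e 0] by simp

lemma mult_swap_inner: "(a::'a) * y * z * b = a * z * y * b"
  using abelian_swap_inner[OF abelian idempotent_power_idem] .

lemma spow_mult_distrib: "spow ((a::'a) * b) n = spow a n * spow b n"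
proof (induction n)
  case (Suc n)
  have "spow (a * b) (Suc n) = spow a n * spow b n * a * b" using Suc by (simp add: mult.assoc)
  also have "\<dots> = spow a n * a * spow b n * b" using mult_swap_inner by blast
  finally show ?case by (simp add: mult.assoc)
qed simp

lemma idempotent_power_mult:
  "idempotent_power ((a::'a) * b) = idempotent_power a * idempotent_power b"
proof -
  obtain m where m: "idempotent_power a = spow a m"
    unfolding idempotent_power_def by blast
  obtain n where n: "idempotent_power b = spow b n"
    unfolding idempotent_power_def by blast
  have "spow a (m * n + m + n) = spow (idempotent_power a) n" by (simp add: m spow_spow)
  also have "\<dots> = idempotent_power a" by (rule spow_idempotent[OF idempotent_power_idem])
  finally have a: "spow a (m * n + m + n) = idempotent_power a" .
  have "spow b (m * n + m + n) = spow (idempotent_power b) m"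
    by (simp add: n spow_spow algebra_simps)
  also have "\<dots> = idempotent_power b" by (rule spow_idempotent[OF idempotent_power_idem])
  finally have "spow (a * b) (m * n + m + n) = idempotent_power a * idempotent_power b"
    using a by (simp add: spow_mult_distrib)
  moreover have "(idempotent_power a * idempotent_power b) * (idempotent_power a * idempotent_power b)
      = idempotent_power a * idempotent_power b"
    using abelian_idempotent_mult[OF abelian] idempotent_power_idem by blast
  ultimately show ?thesis using idempotent_power_eq by metis
qed

lemma mult_eq_retracts:
  "(x::'a) * y = (x * idempotent_power x) * (y * idempotent_power y)"
proof -
  have "idempotent_power y * y = idempotent_power y * (y * idempotent_power y)"
    by (metis idempotent_power_commute idempotent_power_idem mult.assoc)
  then have "v * y = v * (y * idempotent_power y)" for v
    using abelian_mult_left[OF abelian] by blast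
  moreover have "x * idempotent_power x = (x * idempotent_power x) * idempotent_power x"
    by (simp add: mult.assoc idempotent_power_idem)
  then have "x * v = (x * idempotent_power x) * v" for v
    using abelian_mult_right[OF abelian] by blast
  ultimately show ?thesis by metis
qed

lemma retract_in_group_part: "(x::'a) * idempotent_power x \<in> group_part"
proof -
  have "idempotent_power (x * idempotent_power x) = idempotent_power x"
    using idempotent_power_mult idempotent_power_of_idempotent idempotent_power_idem by simp
  then show ?thesis unfolding group_part_def by (simp add: mult.assoc idempotent_power_idem)
qed

lemma mult_in_group_part: "(a::'a) * b \<in> group_part"
proof -
  have "x * y \<in> group_part" if "x \<in> group_part" "y \<in> group_part" for x y :: 'a
  proof -
    have "(x * y) * idempotent_power (x * y) = x * idempotent_power x * (y * idempotent_power y)"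
      using abelian_absorb_idempotent[OF abelian idempotent_power_idem]
      by (simp add: idempotent_power_mult mult.assoc)
    then show ?thesis using that unfolding group_part_def by simp
  qed
  then show ?thesis using retract_in_group_part mult_eq_retracts by metis
qed

lemma maximal_subgroup_periodic_comm_group:
  assumes w: "(w::'a) * w = w"
  shows "subsg (maximal_subgroup w) \<and> periodic_comm_group (maximal_subgroup w)"
proof -
  let ?H = "maximal_subgroup w"
  let ?G = "\<lparr>carrier = ?H, mult = (*), one = w\<rparr>"
  have w_in: "w \<in> ?H"
    unfolding maximal_subgroup_def group_part_def using w idempotent_power_of_idempotent[OF w] by simp
  have closed: "a * b \<in> ?H" if "a \<in> ?H" "b \<in> ?H" for a b
    using that mult_in_group_part idempotent_power_mult w unfolding maximal_subgroup_def by auto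
  have unit: "w * b = b" "b * w = b" if "b \<in> ?H" for b
    using that idempotent_power_commute[of b] unfolding maximal_subgroup_def group_part_def by auto
  have pow_in: "spow x k \<in> ?H" if "x \<in> ?H" for x k
    using that closed by (induction k) simp_all
  have pow_eq: "x [^]\<^bsub>?G\<^esub> Suc n = spow x n" if "x \<in> ?H" for x n
    using nat_pow_Suc_eq_spow[of ?H w x n] unit that by blast
  have periodic_elem: "\<exists>n. x [^]\<^bsub>?G\<^esub> Suc n = w" if x: "x \<in> ?H" for x
  proof -
    obtain n where "idempotent_power x = spow x n" unfolding idempotent_power_def by blast
    then show ?thesis using x pow_eq unfolding maximal_subgroup_def by auto
  qed
  have inverse: "\<exists>y\<in>?H. y * b = w" if b: "b \<in> ?H" for b
  proof -
    obtain n where n: "idempotent_power b = spow b n" unfolding idempotent_power_def by blast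
    have "spow b (2 * n) * b = spow b n * spow b n" using spow_add[of b n n] by (simp add: mult_2)
    also have "\<dots> = w" using n b idempotent_power_idem[of b] unfolding maximal_subgroup_def by simp
    finally have "spow b (2 * n) * b = w" .
    then show ?thesis using pow_in[OF b] by blast
  qed
  have commute: "a * b = b * a" if "a \<in> ?H" "b \<in> ?H" for a b
  proof -
    have "a * b = w * a * b * w" using unit that by (simp add: mult.assoc)
    also have "\<dots> = w * b * a * w" using mult_swap_inner by blast
    also have "\<dots> = b * a" using unit that by (simp add: mult.assoc)
    finally show ?thesis .
  qed
  have "comm_group ?G"
    by (rule comm_groupI) (auto simp: closed w_in mult.assoc unit inverse intro: commute)
  moreover have "subsg ?H" unfolding subsg_def using w_in closed by auto
  ultimately show ?thesis
    unfolding periodic_comm_group_def using periodic_elem by blast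
qed

lemma inflation_of_group_part: "inflation_of (group_part :: 'a set)"
  unfolding inflation_of_def
proof (intro conjI exI[of _ "\<lambda>b. {x. x * idempotent_power x = b}"])
  show "subsg (group_part :: 'a set)"
    unfolding subsg_def using mult_in_group_part by blast
  show "(\<Union>b\<in>group_part. {x::'a. x * idempotent_power x = b}) = UNIV"
    using retract_in_group_part by blast
  show "\<forall>b\<in>group_part. b \<in> {x::'a. x * idempotent_power x = b}"
    unfolding group_part_def by simp
  show "\<forall>a\<in>group_part. \<forall>b\<in>group_part. a \<noteq> b \<longrightarrow>
      {x::'a. x * idempotent_power x = a} \<inter> {x. x * idempotent_power x = b} = {}"
    by auto
  show "\<forall>a\<in>group_part. \<forall>b\<in>group_part. \<forall>x\<in>{x::'a. x * idempotent_power x = a}.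
      \<forall>y\<in>{x. x * idempotent_power x = b}. x * y = a * b"
    using mult_eq_retracts by auto
qed

text \<open>Fixing an idempotent \<open>e\<close>, the idempotents \<open>f\<close> are coordinatised by \<open>(f e, e f)\<close>.\<close>
lemma rect_band_pcg_group_part: "rect_band_pcg (group_part :: 'a set)"
proof -
  obtain e :: 'a where e: "e * e = e" using idempotent_power_idem by blast
  define I where "I = {f * e | f. f * f = f}"
  define L where "L = {e * g | g. g * g = g}"
  define T :: "'a \<Rightarrow> 'a \<Rightarrow> 'a set" where "T i l = maximal_subgroup (i * l)" for i l
  have idem: "x * x = x" if "x \<in> I \<union> L" for x
    using that abelian_idempotent_mult[OF abelian] e unfolding I_def L_def by auto
  then have idem_IL: "(i * l) * (i * l) = i * l" if "i \<in> I" "l \<in> L" for i l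
    using that abelian_idempotent_mult[OF abelian] by blast
  have coords: "i * l * e = i \<and> e * (i * l) = l" if "i \<in> I" "l \<in> L" for i l
    using that abelian_idempotent_rectangular[OF abelian e] unfolding I_def L_def by auto
  have cover: "b \<in> T (idempotent_power b * e) (e * idempotent_power b)" if "b \<in> group_part" for b
  proof -
    have "idempotent_power b * e * (e * idempotent_power b) = idempotent_power b"
      using abelian_absorb_idempotent[OF abelian e] e idempotent_power_idem
      by (metis mult.assoc)
    then show ?thesis using that unfolding T_def maximal_subgroup_def by simp
  qed
  have product: "x * y \<in> T i m"
    if "i \<in> I" "l \<in> L" "j \<in> I" "m \<in> L" "x \<in> T i l" "y \<in> T j m" for i l j m x y
  proof -
    have "idempotent_power (x * y) = i * (l * j) * m"
      using that idempotent_power_mult unfolding T_def maximal_subgroup_def by (simp add: mult.assoc)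
    also have "\<dots> = i * m"
      using abelian_absorb_idempotent[OF abelian abelian_idempotent_mult[OF abelian]] idem that
      by blast
    finally show ?thesis unfolding T_def maximal_subgroup_def using mult_in_group_part by simp
  qed
  show ?thesis
    unfolding rect_band_pcg_def
  proof (intro exI conjI ballI impI)
    show "(\<Union>i\<in>I. \<Union>l\<in>L. T i l) = group_part"
    proof
      show "(\<Union>i\<in>I. \<Union>l\<in>L. T i l) \<subseteq> group_part"
        unfolding T_def maximal_subgroup_def by blast
      show "group_part \<subseteq> (\<Union>i\<in>I. \<Union>l\<in>L. T i l)"
      proof
        fix b :: 'a assume "b \<in> group_part"
        moreover have "idempotent_power b * e \<in> I" "e * idempotent_power b \<in> L"
          unfolding I_def L_def using idempotent_power_idem by blast+
        ultimately show "b \<in> (\<Union>i\<in>I. \<Union>l\<in>L. T i l)" using cover by blast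
      qed
    qed
    show "T i l \<noteq> {}" if "i \<in> I" "l \<in> L" for i l
    proof -
      have "i * l \<in> T i l"
        using idem_IL[OF that] idempotent_power_of_idempotent
        unfolding T_def maximal_subgroup_def group_part_def by simp
      then show ?thesis by blast
    qed
    show "T i l \<inter> T j m = {}" if "i \<in> I" "l \<in> L" "j \<in> I" "m \<in> L" "(i, l) \<noteq> (j, m)"
      for i l j m
    proof -
      have "i * l \<noteq> j * m" using that coords by metis
      then show ?thesis unfolding T_def maximal_subgroup_def by auto
    qed
    show "subsg (T i l)" "periodic_comm_group (T i l)" if "i \<in> I" "l \<in> L" for i l
      using that idem_IL maximal_subgroup_periodic_comm_group unfolding T_def by blast+
    show "x * y \<in> T i m" if "i \<in> I" "l \<in> L" "j \<in> I" "m \<in> L" "x \<in> T i l" "y \<in> T j m"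
      for i l j m x y
      using product that by blast
  qed
qed

end

section \<open>Inflations of rectangular bands of periodic groups\<close>

lemma idempotent_spow_if_periodic_comm_group:
  assumes "periodic_comm_group T" and "x \<in> T"
  shows "\<exists>n. spow x n * spow x n = spow x n"
proof -
  obtain e where "comm_group \<lparr>carrier = T, mult = (*), one = e\<rparr>"
    and per: "\<forall>x\<in>T. \<exists>n::nat. n > 0 \<and> x [^]\<^bsub>\<lparr>carrier = T, mult = (*), one = e\<rparr>\<^esub> n = e"
    using assms(1) unfolding periodic_comm_group_def by blast
  then interpret monoid "\<lparr>carrier = T, mult = (*), one = e\<rparr>"
    by (simp add: comm_group_def group_def comm_monoid_def)
  have unit: "\<And>y. y \<in> T \<Longrightarrow> e * y = y" using l_one by simp
  obtain n :: nat where "n > 0" "x [^]\<^bsub>\<lparr>carrier = T, mult = (*), one = e\<rparr>\<^esub> n = e"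
    using per assms(2) by blast
  then obtain m where "spow x m = e"
    using nat_pow_Suc_eq_spow[OF unit assms(2)] by (metis gr0_implies_Suc)
  moreover have "e * e = e" using unit one_closed by simp
  ultimately show ?thesis by metis
qed

lemma idempotent_spow_if_rect_band_pcg:
  assumes "rect_band_pcg B" and "x \<in> B"
  shows "\<exists>n. spow x n * spow x n = spow x n"
proof -
  obtain I L :: "'a set" and T where "(\<Union>i\<in>I. \<Union>l\<in>L. T i l) = B"
    and "\<forall>i\<in>I. \<forall>l\<in>L. subsg (T i l) \<and> periodic_comm_group (T i l)"
    using assms(1) unfolding rect_band_pcg_def by (elim exE conjE) (rule that)
  then show ?thesis using assms(2) idempotent_spow_if_periodic_comm_group by blast
qed

lemma square_in_if_inflation_of:
  assumes "inflation_of B"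
  shows "x * x \<in> B"
proof -
  obtain X where "(\<Union>b\<in>B. X b) = UNIV" and mult: "\<forall>a\<in>B. \<forall>b\<in>B. \<forall>x\<in>X a. \<forall>y\<in>X b. x * y = a * b"
    using assms unfolding inflation_of_def by (elim exE conjE) (rule that)
  then obtain a where "a \<in> B" "x \<in> X a" by blast
  then have "x * x = a * a" using mult by blast
  then show ?thesis using \<open>a \<in> B\<close> assms unfolding inflation_of_def subsg_def by simp
qed

lemma periodic_if_inflation_of_rect_band_pcg:
  assumes "inflation_of (B::'a::semigroup_mult set)" and "rect_band_pcg B"
  shows "periodic_sg TYPE('a)"
  unfolding periodic_sg_def
proof
  fix x :: 'a
  obtain m where "spow (x * x) m * spow (x * x) m = spow (x * x) m"
    using idempotent_spow_if_rect_band_pcg[OF assms(2) square_in_if_inflation_of[OF assms(1)]] ..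
  then show "\<exists>n. spow x n * spow x n = spow x n" unfolding spow_square by blast
qed

theorem mainTheorem19:
  assumes "abelian_sg TYPE('a::semigroup_mult)"
  shows "hamiltonian_sg TYPE('a) \<longleftrightarrow>
           ((\<exists>B::'a set. subsg B \<and> inflation_of B \<and> rect_band_pcg B) \<and>
            (\<forall>e f::'a. e * e = e \<longrightarrow> f * f = f \<longrightarrow> (e * f) * (e * f) = e * f))"
proof -
  have idempotents: "\<forall>e f::'a. e * e = e \<longrightarrow> f * f = f \<longrightarrow> (e * f) * (e * f) = e * f"
    using abelian_idempotent_mult[OF assms] by blast
  have "hamiltonian_sg TYPE('a) \<longleftrightarrow> periodic_sg TYPE('a)"
    using periodic_if_hamiltonian hamiltonian_if_abelian_periodic[OF assms] by blast
  also have "\<dots> \<longleftrightarrow> (\<exists>B::'a set. subsg B \<and> inflation_of B \<and> rect_band_pcg B)"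
    using inflation_of_group_part[OF assms] rect_band_pcg_group_part[OF assms]
      periodic_if_inflation_of_rect_band_pcg inflation_of_def
    by metis
  finally show ?thesis using idempotents by blast
qed

end
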